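(* For every graph $G$ (such that $G$ and its complement $G^c$ have no isolated vertices), $B_d^t(G)+B_d^t(G^c)\geq 2$.
   Context: A total dominator coloring (TD-coloring) of a graph $G$ with no isolated vertex is a proper vertex coloring of $G$ in which every vertex is adjacent to every vertex of some color class. The total dominator chromatic number $\chi_d^t(G)$ is the minimum number of colors in a TD-coloring of $G$. The TDC-bondage number $B_d^t(G)$ is the minimum number of edges of $G$ whose removal changes the total dominator chromatic number of $G$. $G^c$ denotes the complement of $G$. *)

theory Defs
  imports Main "HOL-Library.Extended_Nat"
begin

definition graph :: "'a set \<Rightarrow> 'a set set \<Rightarrow> bool" where
  "graph V E \<longleftrightarrow> finite V \<and> (\<forall>e\<in>E. e \<subseteq> V \<and> card e = 2)"

definition adj :: "'a set set \<Rightarrow> 'a \<Rightarrow> 'a \<Rightarrow> bool" where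
  "adj E u v \<longleftrightarrow> {u, v} \<in> E"

definition no_isolated :: "'a set \<Rightarrow> 'a set set \<Rightarrow> bool" where
  "no_isolated V E \<longleftrightarrow> (\<forall>v\<in>V. \<exists>w\<in>V. adj E v w)"

definition compl_edges :: "'a set \<Rightarrow> 'a set set \<Rightarrow> 'a set set" where
  "compl_edges V E = {{u, v} | u v. u \<in> V \<and> v \<in> V \<and> u \<noteq> v \<and> {u, v} \<notin> E}"

definition proper_coloring :: "'a set \<Rightarrow> 'a set set \<Rightarrow> ('a \<Rightarrow> nat) \<Rightarrow> bool" where
  "proper_coloring V E f \<longleftrightarrow> (\<forall>u\<in>V. \<forall>v\<in>V. adj E u v \<longrightarrow> f u \<noteq> f v)"

definition td_coloring :: "'a set \<Rightarrow> 'a set set \<Rightarrow> ('a \<Rightarrow> nat) \<Rightarrow> bool" where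
  "td_coloring V E f \<longleftrightarrow> proper_coloring V E f \<and>
     (\<forall>v\<in>V. \<exists>c\<in>f ` V. \<forall>w\<in>V. f w = c \<longrightarrow> adj E v w)"

text \<open>Total dominator chromatic number; it is \<infinity> if no TD-coloring exists
  (i.e. the graph has an isolated vertex).\<close>
definition td_chromatic :: "'a set \<Rightarrow> 'a set set \<Rightarrow> enat" where
  "td_chromatic V E = (INF f \<in> {f. td_coloring V E f}. enat (card (f ` V)))"

text \<open>TDC-bondage number: minimum number of edges whose removal changes the
  total dominator chromatic number (\<infinity> if there is no such edge set).\<close>
definition tdc_bondage :: "'a set \<Rightarrow> 'a set set \<Rightarrow> enat" where
  "tdc_bondage V E = Inf {enat (card F) | F. F \<subseteq> E \<and> td_chromatic V (E - F) \<noteq> td_chromatic V E}"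

end

theory Submission
  imports Defs
begin

text \<open>Removing no edges leaves the total dominator chromatic number unchanged, so every
  admissible edge set is nonempty and each bondage number is at least 1.\<close>

lemma tdc_bondage_ge_1:
  assumes "finite E"
  shows "1 \<le> tdc_bondage V E"
  unfolding tdc_bondage_def
proof (rule Inf_greatest)
  fix x
  assume "x \<in> {enat (card F) | F. F \<subseteq> E \<and> td_chromatic V (E - F) \<noteq> td_chromatic V E}"
  then obtain F where x: "x = enat (card F)" and "F \<subseteq> E"
    and changed: "td_chromatic V (E - F) \<noteq> td_chromatic V E"
    by blast
  have "F \<noteq> {}" using changed by auto
  moreover have "finite F" using \<open>F \<subseteq> E\<close> assms by (rule finite_subset)
  ultimately show "1 \<le> x" using x by (simp add: one_enat_def Suc_le_eq card_gt_0_iff)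
qed

lemma finite_edges_if_graph:
  assumes "graph V E"
  shows "finite E"
proof -
  have "E \<subseteq> Pow V" using assms by (auto simp: graph_def)
  with assms show ?thesis by (auto simp: graph_def intro: finite_subset)
qed

lemma finite_compl_edges:
  assumes "finite V"
  shows "finite (compl_edges V E)"
proof -
  have "compl_edges V E \<subseteq> Pow V" by (auto simp: compl_edges_def)
  with assms show ?thesis by (auto intro: finite_subset)
qed

theorem mainTheorem15:
  fixes V :: "'a set" and E :: "'a set set"
  assumes "graph V E"
    and "no_isolated V E"
    and "no_isolated V (compl_edges V E)"
  shows "tdc_bondage V E + tdc_bondage V (compl_edges V E) \<ge> 2"
proof -
  have "finite V" using assms(1) by (simp add: graph_def)
  have "(2::enat) = 1 + 1" by simp
  also have "\<dots> \<le> tdc_bondage V E + tdc_bondage V (compl_edges V E)"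
    using tdc_bondage_ge_1[OF finite_edges_if_graph[OF assms(1)]]
      tdc_bondage_ge_1[OF finite_compl_edges[OF \<open>finite V\<close>]]
    by (rule add_mono)
  finally show ?thesis .
qed

end
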